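(* Under the hypotheses of the standing setting below, let $(u,v)$ be a bounded, decaying, optimal integrable positive solution. Then $u(x)\simeq|x|^{-\frac{n-\beta\gamma}{\gamma-1}}$.
   Context: Standing setting: $n\ge3$, $\beta>0$, $\gamma>1$, $\beta\gamma<n$, $p,q>0$ with $q\ge p$, $pq>(\gamma-1)^2$, $\sigma_1,\sigma_2\in(-\beta\gamma,\infty)$ with $\sigma_1\le\sigma_2$, $q_0+p_0\le\frac{n-\beta\gamma}{\gamma-1}$ where $q_0=\frac{\beta\gamma(\gamma-1+q)+(\gamma-1)\sigma_1+\sigma_2 q}{pq-(\gamma-1)^2}$, $p_0=\frac{\beta\gamma(\gamma-1+p)+(\gamma-1)\sigma_2+\sigma_1 p}{pq-(\gamma-1)^2}$; $c_1,c_2$ are double bounded (i.e. $1/C\le c_i(x)\le C$ for some $C>0$), and $(u,v)$ is a positive solution (nonnegative $L^1_{loc}$ functions, positive, satisfying the equations a.e.) of $u(x)=c_1(x)W_{\beta,\gamma}(|y|^{\sigma_1}v^q)(x)$, $v(x)=c_2(x)W_{\beta,\gamma}(|y|^{\sigma_2}u^p)(x)$, where $W_{\beta,\gamma}(f)(x)=\int_0^\infty\Big(\frac{\int_{B_t(x)}f(y)\,dy}{t^{n-\beta\gamma}}\Big)^{\frac{1}{\gamma-1}}\frac{dt}{t}$. For positive $f$, $f(x)\simeq g(x)$ means $1/c\le f(x)/g(x)\le c$ for some $c>0$ and all sufficiently large $|x|$; decaying means $u\simeq|x|^{-\theta_1}$, $v\simeq|x|^{-\theta_2}$ for some $\theta_1,\theta_2>0$.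 Optimal integrable means $(u,v)\in L^r\times L^s$ for all $r>\frac{n(\gamma-1)}{n-\beta\gamma}$ and $s>\max\big\{\frac{n(\gamma-1)}{n-\beta\gamma},\frac{n(\gamma-1)}{p\frac{n-\beta\gamma}{\gamma-1}-(\beta\gamma+\sigma_2)}\big\}$. *)

theory Defs
  imports "HOL-Analysis.Analysis"
begin

definition ball_int :: "((real^'n::finite) \<Rightarrow> real) \<Rightarrow> (real^'n) \<Rightarrow> real \<Rightarrow> ennreal"
  where "ball_int f x t = (\<integral>\<^sup>+ y. indicator (ball x t) y * ennreal (f y) \<partial>lborel)"

definition wolff :: "real \<Rightarrow> real \<Rightarrow> ((real^'n::finite) \<Rightarrow> real) \<Rightarrow> (real^'n) \<Rightarrow> ennreal"
  where "wolff \<beta> \<gamma> f x =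
    (\<integral>\<^sup>+ t. indicator {0<..} t *
       (if ball_int f x t = \<infinity> then \<infinity>
        else ennreal ((enn2real (ball_int f x t) / t powr (real CARD('n) - \<beta> * \<gamma>))
                        powr (1 / (\<gamma> - 1)) / t)) \<partial>lborel)"

definition double_bounded :: "('a \<Rightarrow> real) \<Rightarrow> bool"
  where "double_bounded c \<longleftrightarrow> (\<exists>C>0. \<forall>x. 1 / C \<le> c x \<and> c x \<le> C)"

definition asymp_equiv_large :: "((real^'n::finite) \<Rightarrow> real) \<Rightarrow> ((real^'n) \<Rightarrow> real) \<Rightarrow> bool"
  where "asymp_equiv_large f g \<longleftrightarrow>
    (\<exists>c>0. \<exists>R. \<forall>x. norm x \<ge> R \<longrightarrow> 1 / c \<le> f x / g x \<and> f x / g x \<le> c)"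

definition locally_L1 :: "((real^'n::finite) \<Rightarrow> real) \<Rightarrow> bool"
  where "locally_L1 f \<longleftrightarrow> f \<in> borel_measurable lborel \<and>
     (\<forall>K. compact K \<longrightarrow> set_integrable lborel K f)"

end

theory Submission
  imports Defs
begin

text \<open>
  Write \<open>u \<simeq> |x|\<^sup>-\<^sup>\<theta>\<close> and \<open>e = (n - \<beta>\<gamma>)/(\<gamma> - 1)\<close>.  If \<open>\<theta> < e\<close>, then \<open>r = n/\<theta>\<close> exceeds the
  critical exponent \<open>n/e\<close>, so \<open>u\<^sup>r\<close> is integrable; but \<open>u\<^sup>r \<simeq> |x|\<^sup>-\<^sup>n\<close>, which is not integrable at
  infinity (each dyadic annulus contributes the same amount).  If \<open>\<theta> > e\<close>, note that the Wolff
  potential of any a.e. positive function is at least \<open>C |x|\<^sup>-\<^sup>e\<close> for \<open>|x| \<ge> 1\<close>: for radii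
  \<open>t \<in> (2|x|, 4|x|)\<close> the ball \<open>B\<^sub>t(x)\<close> contains \<open>B\<^sub>1(0)\<close>, and integrating the resulting lower bound of
  the integrand over these radii gives \<open>|x|\<^sup>-\<^sup>e\<close>.  Hence \<open>u \<ge> C |x|\<^sup>-\<^sup>e\<close>, contradicting faster decay.
\<close>

lemma nn_integral_norm_powr_neg_DIM_annulus_ge:
  fixes a :: real
  assumes a: "a > 0"
  shows "ennreal (unit_ball_vol DIM('a) * (1 - 1 / 2 ^ DIM('a)))
    \<le> (\<integral>\<^sup>+ x. indicator (ball (0::'a::euclidean_space) (2*a) - ball 0 a) x
               * ennreal (norm x powr - real DIM('a)) \<partial>lborel)"
proof -
  define d where "d = DIM('a)"
  define V where "V = unit_ball_vol d"
  define S where "S = ball (0::'a) (2*a) - ball 0 a"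
  have V: "V > 0" unfolding V_def by simp
  have "V * (1 - 1 / 2 ^ d) = (2*a) powr - real d * (V * (2*a) ^ d - V * a ^ d)"
    using a by (simp add: powr_minus powr_realpow field_simps power_mult_distrib)
  also have "ennreal \<dots> = ennreal ((2*a) powr - real d) * ennreal (V * (2*a) ^ d - V * a ^ d)"
    using a V by (intro ennreal_mult) (auto intro!: mult_left_mono power_mono)
  also have "ennreal (V * (2*a) ^ d - V * a ^ d) = ennreal (V * (2*a) ^ d) - ennreal (V * a ^ d)"
    using a V by (subst ennreal_minus) (auto intro!: mult_left_mono power_mono)
  also have "ennreal (V * (2*a) ^ d) - ennreal (V * a ^ d) = emeasure lborel S"
    using a unfolding S_def
    by (subst emeasure_Diff) (auto simp: emeasure_ball V_def d_def emeasure_lborel_ball_finite)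
  also have "ennreal ((2*a) powr - real d) * \<dots> = (\<integral>\<^sup>+ x. ennreal ((2*a) powr - real d) * indicator S x \<partial>lborel)"
    unfolding S_def by (subst nn_integral_cmult_indicator) auto
  also have "\<dots> \<le> (\<integral>\<^sup>+ x. indicator S x * ennreal (norm x powr - real d) \<partial>lborel)"
  proof (rule nn_integral_mono)
    fix x :: 'a
    have "x \<in> S \<Longrightarrow> (2*a) powr - real d \<le> norm x powr - real d"
      using a unfolding S_def by (intro powr_mono2') auto
    then show "ennreal ((2*a) powr - real d) * indicator S x \<le> indicator S x * ennreal (norm x powr - real d)"
      by (auto simp: indicator_def intro: ennreal_leI)
  qed
  finally show ?thesis unfolding S_def V_def d_def .
qed

lemma nn_integral_norm_powr_neg_DIM_exterior:
  fixes R :: real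
  assumes R: "R > 0"
  shows "(\<integral>\<^sup>+ x. indicator {x::'a::euclidean_space. R \<le> norm x} x
            * ennreal (norm x powr - real DIM('a)) \<partial>lborel) = \<infinity>"
proof -
  define g where "g x = ennreal (norm x powr - real DIM('a))" for x :: 'a
  define \<delta> where "\<delta> = unit_ball_vol DIM('a) * (1 - 1 / 2 ^ DIM('a))"
  define A where "A N = ball (0::'a) (R * 2 ^ N) - ball 0 R" for N :: nat
  have g: "g \<in> borel_measurable lborel" unfolding g_def by measurable
  have \<delta>: "\<delta> > 0" unfolding \<delta>_def by (simp add: field_simps)
  have annuli: "of_nat N * ennreal \<delta> \<le> (\<integral>\<^sup>+ x. indicator (A N) x * g x \<partial>lborel)" for N
  proof (induction N)
    case (Suc N)
    define B where "B = ball (0::'a) (2 * (R * 2 ^ N)) - ball 0 (R * 2 ^ N)"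
    have "indicator (A (Suc N)) x = indicator (A N) x + (indicator B x :: ennreal)" for x
      using R order_trans[of R "R * 2 ^ N" "norm x"]
      by (auto simp: A_def B_def indicator_def)
    then have "(\<integral>\<^sup>+ x. indicator (A (Suc N)) x * g x \<partial>lborel)
        = (\<integral>\<^sup>+ x. indicator (A N) x * g x + indicator B x * g x \<partial>lborel)"
      by (simp add: distrib_right)
    also have "\<dots> = (\<integral>\<^sup>+ x. indicator (A N) x * g x \<partial>lborel) + (\<integral>\<^sup>+ x. indicator B x * g x \<partial>lborel)"
      using g by (intro nn_integral_add) (auto simp: A_def B_def intro!: borel_measurable_times_ennreal borel_measurable_indicator)
    finally have split: "(\<integral>\<^sup>+ x. indicator (A (Suc N)) x * g x \<partial>lborel)
        = (\<integral>\<^sup>+ x. indicator (A N) x * g x \<partial>lborel) + (\<integral>\<^sup>+ x. indicator B x * g x \<partial>lborel)" .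
    have B: "ennreal \<delta> \<le> (\<integral>\<^sup>+ x. indicator B x * g x \<partial>lborel)"
      using nn_integral_norm_powr_neg_DIM_annulus_ge[of "R * 2 ^ N", where 'a='a] R
      unfolding \<delta>_def g_def B_def by simp
    have "of_nat (Suc N) * ennreal \<delta> = of_nat N * ennreal \<delta> + ennreal \<delta>"
      by (simp add: distrib_right)
    also have "\<dots> \<le> (\<integral>\<^sup>+ x. indicator (A N) x * g x \<partial>lborel) + (\<integral>\<^sup>+ x. indicator B x * g x \<partial>lborel)"
      using Suc.IH B by (rule add_mono)
    finally show ?case using split by simp
  qed simp
  have "(\<integral>\<^sup>+ x. indicator (A N) x * g x \<partial>lborel) \<le> (\<integral>\<^sup>+ x. indicator {x. R \<le> norm x} x * g x \<partial>lborel)" for N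
    by (rule nn_integral_mono) (auto simp: A_def indicator_def)
  then have ge: "ennreal (real N * \<delta>) \<le> (\<integral>\<^sup>+ x. indicator {x. R \<le> norm x} x * g x \<partial>lborel)" for N
    using annuli[of N] \<delta> by (simp add: ennreal_mult ennreal_of_nat_eq_real_of_nat order_trans)
  have "(\<integral>\<^sup>+ x. indicator {x. R \<le> norm x} x * g x \<partial>lborel) = \<infinity>"
  proof (rule ccontr)
    assume "\<not> ?thesis"
    then obtain r where r: "(\<integral>\<^sup>+ x. indicator {x. R \<le> norm x} x * g x \<partial>lborel) = ennreal r" "r \<ge> 0"
      by (cases "\<integral>\<^sup>+ x. indicator {x. R \<le> norm x} x * g x \<partial>lborel") auto
    obtain N :: nat where "r / \<delta> < real N" using reals_Archimedean2 by blast
    then have "r < real N * \<delta>" using \<delta> by (simp add: field_simps)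
    with ge[of N] r show False by simp
  qed
  then show ?thesis by (simp add: g_def)
qed

lemma not_integrable_powr_DIM_div_if_powr_lower_bound:
  fixes u :: "'a::euclidean_space \<Rightarrow> real"
  assumes \<theta>: "\<theta> > 0" and a: "a > 0"
    and lower: "\<And>x. R \<le> norm x \<Longrightarrow> a * norm x powr - \<theta> \<le> \<bar>u x\<bar>"
  shows "\<not> integrable lborel (\<lambda>x. \<bar>u x\<bar> powr (DIM('a) / \<theta>))"
proof
  define r where "r = DIM('a) / \<theta>"
  define E where "E = {x::'a. max R 1 \<le> norm x}"
  assume "integrable lborel (\<lambda>x. \<bar>u x\<bar> powr (DIM('a) / \<theta>))"
  then have fin: "(\<integral>\<^sup>+ x. ennreal (\<bar>u x\<bar> powr r) \<partial>lborel) \<noteq> \<infinity>"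
    unfolding r_def by blast
  have r: "r > 0" unfolding r_def using \<theta> by simp
  have pointwise: "ennreal (a powr r) * (indicator E x * ennreal (norm x powr - real DIM('a)))
      \<le> ennreal (\<bar>u x\<bar> powr r)" for x
  proof (cases "x \<in> E")
    case True
    then have "norm x \<ge> 1" unfolding E_def by simp
    then have "norm x > 0" by linarith
    then have "a powr r * norm x powr - real DIM('a) = (a * norm x powr - \<theta>) powr r"
      using a \<theta> by (simp add: r_def powr_mult powr_powr)
    also have "\<dots> \<le> \<bar>u x\<bar> powr r"
      using True a r lower[of x] unfolding E_def by (intro powr_mono2) auto
    finally show ?thesis
      using True a by (simp add: ennreal_mult'[symmetric] ennreal_leI)
  qed simp
  have "\<infinity> = ennreal (a powr r) * (\<integral>\<^sup>+ x. indicator E x * ennreal (norm x powr - real DIM('a)) \<partial>lborel)"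
    using nn_integral_norm_powr_neg_DIM_exterior[of "max R 1", where 'a='a] a
    unfolding E_def by simp
  also have "\<dots> = (\<integral>\<^sup>+ x. ennreal (a powr r) * (indicator E x * ennreal (norm x powr - real DIM('a))) \<partial>lborel)"
    unfolding E_def by (rule nn_integral_cmult[symmetric]) measurable
  also have "\<dots> \<le> (\<integral>\<^sup>+ x. ennreal (\<bar>u x\<bar> powr r) \<partial>lborel)"
    using pointwise by (rule nn_integral_mono)
  finally show False using fin by (simp add: top_unique)
qed

lemma powr_decay_exponent_ge_if_integrable:
  fixes u :: "'a::euclidean_space \<Rightarrow> real"
  assumes \<theta>: "\<theta> > 0" and a: "a > 0"
    and lower: "\<And>x. R \<le> norm x \<Longrightarrow> a * norm x powr - \<theta> \<le> \<bar>u x\<bar>"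
    and int: "\<And>r. DIM('a) / e < r \<Longrightarrow> integrable lborel (\<lambda>x. \<bar>u x\<bar> powr r)"
  shows "e \<le> \<theta>"
proof (rule ccontr)
  assume "\<not> e \<le> \<theta>"
  then have "DIM('a) / e < DIM('a) / \<theta>"
    using \<theta> by (intro divide_strict_left_mono) auto
  with int not_integrable_powr_DIM_div_if_powr_lower_bound[OF \<theta> a lower] show False
    by blast
qed

lemma ball_int_pos:
  fixes f :: "real^'n::finite \<Rightarrow> real"
  assumes f: "f \<in> borel_measurable lborel" and pos: "AE y in lborel. f y > 0" and t: "t > 0"
  shows "ball_int f x t > 0"
proof (rule ccontr)
  assume "\<not> ball_int f x t > 0"
  then have "set_nn_integral lborel (ball x t) (\<lambda>y. ennreal (f y)) = 0"
    unfolding ball_int_def by (simp add: mult.commute)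
  then have "ball x t \<in> null_sets lborel"
    using f pos by (intro null_if_pos_func_has_zero_nn_int) (auto elim!: AE_mp)
  moreover have "emeasure lborel (ball x t) > 0"
    using t by (simp add: emeasure_ball)
  ultimately show False by (simp add: null_sets_def)
qed

lemma ball_int_mono:
  assumes "ball x s \<subseteq> ball z t"
  shows "ball_int f x s \<le> ball_int f z t"
  unfolding ball_int_def
  by (rule nn_integral_mono) (use assms in \<open>auto simp: indicator_def\<close>)

lemma wolff_ge_norm_powr:
  fixes f :: "real^'n::finite \<Rightarrow> real"
  assumes m: "\<beta> * \<gamma> < real CARD('n)" and \<gamma>: "\<gamma> > 1" and pos: "ball_int f 0 1 > 0"
  shows "\<exists>K>0. \<forall>x. 1 \<le> norm x \<longrightarrow>
           ennreal (K * norm x powr - ((real CARD('n) - \<beta> * \<gamma>) / (\<gamma> - 1))) \<le> wolff \<beta> \<gamma> f x"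
proof -
  define m where "m = real CARD('n) - \<beta> * \<gamma>"
  define e where "e = m / (\<gamma> - 1)"
  have m0: "m > 0" using m unfolding m_def by simp
  obtain A where A: "A > 0" "ennreal A \<le> ball_int f 0 1"
  proof (cases "ball_int f 0 1 = \<infinity>")
    case False
    then show ?thesis
      using that[of "enn2real (ball_int f 0 1)"] pos by (simp add: enn2real_positive_iff less_top)
  qed (use that[of 1] in simp)
  define K where "K = A powr (1 / (\<gamma> - 1)) / 2 * 4 powr - e"
  have "ennreal (K * norm x powr - e) \<le> wolff \<beta> \<gamma> f x" if x: "1 \<le> norm x" for x
  proof -
    define s where "s = norm x"
    define b where "b = (A / (4 * s) powr m) powr (1 / (\<gamma> - 1)) / (4 * s)"
    have s: "s \<ge> 1" using x unfolding s_def by simp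
    have integrand: "ennreal b * indicator {2 * s<..<4 * s} t \<le> indicator {0<..} t *
        (if ball_int f x t = \<infinity> then \<infinity>
         else ennreal ((enn2real (ball_int f x t) / t powr (real CARD('n) - \<beta> * \<gamma>))
                         powr (1 / (\<gamma> - 1)) / t))" for t
    proof (cases "t \<in> {2 * s<..<4 * s} \<and> ball_int f x t \<noteq> \<infinity>")
      case True
      then have t: "2 * s < t" "t < 4 * s" "t > 0" using s by auto
      have "ball 0 1 \<subseteq> ball x t"
      proof
        fix y :: "real^'n" assume "y \<in> ball 0 1"
        then have "norm (x - y) < t"
          using t s norm_triangle_ineq4[of x y] unfolding s_def by simp
        then show "y \<in> ball x t" by (simp add: dist_norm)
      qed
      then have "ennreal A \<le> ball_int f x t" using A(2) ball_int_mono order_trans by blast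
      then have "A \<le> enn2real (ball_int f x t)"
        using True A(1) enn2real_mono[of "ennreal A" "ball_int f x t"] by (simp add: less_top)
      then have "A / (4 * s) powr m \<le> enn2real (ball_int f x t) / t powr m"
        using t m0 A(1) by (intro frac_le powr_mono2) auto
      then have "(A / (4 * s) powr m) powr (1 / (\<gamma> - 1))
          \<le> (enn2real (ball_int f x t) / t powr m) powr (1 / (\<gamma> - 1))"
        using \<gamma> A(1) by (intro powr_mono2) auto
      then have "b \<le> (enn2real (ball_int f x t) / t powr m) powr (1 / (\<gamma> - 1)) / t"
        unfolding b_def using t by (intro frac_le) auto
      then show ?thesis using True t by (simp add: m_def ennreal_leI)
    qed (use s in \<open>auto simp: indicator_def\<close>)
    have "ennreal (b * (2 * s)) = ennreal b * ennreal (2 * s)"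
      using s A(1) by (intro ennreal_mult) (auto simp: b_def)
    also have "ennreal (2 * s) = emeasure lborel {2 * s<..<4 * s}"
      using s by simp
    also have "ennreal b * emeasure lborel {2 * s<..<4 * s}
        = (\<integral>\<^sup>+ t. ennreal b * indicator {2 * s<..<4 * s} t \<partial>lborel)"
      by (simp add: nn_integral_cmult_indicator)
    also have "\<dots> \<le> wolff \<beta> \<gamma> f x"
      unfolding wolff_def by (rule nn_integral_mono) (rule integrand)
    also have "b * (2 * s) = K * s powr - e"
      using A(1) s
      by (simp add: b_def K_def e_def powr_divide powr_powr powr_mult powr_minus field_simps)
    finally show ?thesis unfolding s_def .
  qed
  moreover have "K > 0" unfolding K_def using A by simp
  ultimately show ?thesis unfolding e_def m_def by blast
qed

lemma AE_lborel_ex_norm_ge: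
  assumes "AE x in lborel. P x"
  shows "\<exists>x::'a::euclidean_space. M \<le> norm x \<and> P x"
proof (rule ccontr)
  obtain z :: 'a where z: "norm z = \<bar>M\<bar> + 1"
    using vector_choose_size[of "\<bar>M\<bar> + 1"] by auto
  assume "\<not> ?thesis"
  moreover have "M \<le> norm x" if "x \<in> ball z 1" for x
    using that z norm_triangle_ineq2[of z x] by (simp add: dist_norm)
  ultimately have "AE x in lborel. x \<notin> ball z 1"
    using assms by (auto elim!: AE_mp)
  then have "emeasure lborel (ball z 1) = 0"
    by (subst (asm) AE_iff_measurable[of "ball z 1"]) auto
  then show False using unit_ball_vol_pos[of "real DIM('a)"] by (simp add: emeasure_ball)
qed

lemma powr_decay_exponent_le:
  fixes g :: "'a::euclidean_space \<Rightarrow> real"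
  assumes a: "a > 0"
    and lower: "AE x in lborel. R0 \<le> norm x \<longrightarrow> a * norm x powr - e \<le> g x"
    and upper: "\<And>x. R \<le> norm x \<Longrightarrow> g x \<le> c * norm x powr - \<theta>"
  shows "\<theta> \<le> e"
proof (rule ccontr)
  assume "\<not> \<theta> \<le> e"
  then have "eventually (\<lambda>s. c / a < s powr (\<theta> - e)) at_top"
    using real_powr_at_top[of "\<theta> - e"] by (simp add: filterlim_at_top_dense)
  then obtain M where M: "\<And>s. M \<le> s \<Longrightarrow> c / a < s powr (\<theta> - e)"
    by (auto simp: eventually_at_top_linorder)
  obtain x where x: "max (max R0 R) (max M 1) \<le> norm x" "R0 \<le> norm x \<longrightarrow> a * norm x powr - e \<le> g x"
    using AE_lborel_ex_norm_ge[OF lower] by blast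
  then have x0: "norm x > 0" by linarith
  have "a * norm x powr (\<theta> - e) = (a * norm x powr - e) * norm x powr \<theta>"
    by (simp add: powr_add[symmetric])
  also have "\<dots> \<le> (c * norm x powr - \<theta>) * norm x powr \<theta>"
    using x upper[of x] by (intro mult_right_mono) auto
  also have "\<dots> = c"
    using x0 by (simp add: powr_add[symmetric])
  finally have "norm x powr (\<theta> - e) \<le> c / a"
    using a by (simp add: pos_le_divide_eq mult.commute)
  with M[of "norm x"] x(1) show False by simp
qed

lemma wolff_solution_ge_norm_powr:
  fixes u c f :: "real^'n::finite \<Rightarrow> real"
  assumes m: "\<beta> * \<gamma> < real CARD('n)" and \<gamma>: "\<gamma> > 1" and c: "double_bounded c"
    and f: "f \<in> borel_measurable lborel" "AE y in lborel. f y > 0"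
    and eq: "AE x in lborel. ennreal (u x) = ennreal (c x) * wolff \<beta> \<gamma> f x"
  shows "\<exists>a>0. AE x in lborel. 1 \<le> norm x \<longrightarrow>
           a * norm x powr - ((real CARD('n) - \<beta> * \<gamma>) / (\<gamma> - 1)) \<le> u x"
proof -
  define e where "e = (real CARD('n) - \<beta> * \<gamma>) / (\<gamma> - 1)"
  obtain K where K: "K > 0" "\<And>x. 1 \<le> norm x \<Longrightarrow> ennreal (K * norm x powr - e) \<le> wolff \<beta> \<gamma> f x"
    using wolff_ge_norm_powr[OF m \<gamma> ball_int_pos[OF f]] unfolding e_def by auto
  obtain C where C: "C > 0" "\<And>x. 1 / C \<le> c x"
    using c unfolding double_bounded_def by blast
  have "AE x in lborel. 1 \<le> norm x \<longrightarrow> K / C * norm x powr - e \<le> u x"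
    using eq
  proof (rule AE_mp, intro AE_I2 impI)
    fix x :: "real^'n"
    assume u: "ennreal (u x) = ennreal (c x) * wolff \<beta> \<gamma> f x" and x: "1 \<le> norm x"
    have "ennreal (K / C * norm x powr - e) = ennreal (1 / C) * ennreal (K * norm x powr - e)"
      using C K by (simp add: ennreal_mult[symmetric])
    also have "\<dots> \<le> ennreal (c x) * wolff \<beta> \<gamma> f x"
      using C(2)[of x] K(2)[OF x] by (intro mult_mono) (auto intro: ennreal_leI)
    finally have "ennreal (K / C * norm x powr - e) \<le> ennreal (u x)"
      using u by simp
    moreover have "K / C * norm x powr - e > 0"
      using K C x by (intro mult_pos_pos divide_pos_pos) auto
    ultimately show "K / C * norm x powr - e \<le> u x"
      unfolding ennreal_le_iff2 by linarith
  qed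
  moreover have "K / C > 0" using K C by simp
  ultimately show ?thesis unfolding e_def by blast
qed

lemma asymp_equiv_large_norm_powrE:
  fixes u :: "real^'n::finite \<Rightarrow> real"
  assumes "asymp_equiv_large u (\<lambda>x. norm x powr - \<theta>)"
  obtains c R where "c > 0"
    "\<And>x. R \<le> norm x \<Longrightarrow> norm x powr - \<theta> / c \<le> u x \<and> u x \<le> c * norm x powr - \<theta>"
proof -
  obtain c R where c: "c > 0" and bounds:
    "\<And>x. R \<le> norm x \<Longrightarrow> 1 / c \<le> u x / norm x powr - \<theta> \<and> u x / norm x powr - \<theta> \<le> c"
    using assms unfolding asymp_equiv_large_def by blast
  have "norm x powr - \<theta> / c \<le> u x \<and> u x \<le> c * norm x powr - \<theta>" if "max R 1 \<le> norm x" for x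
  proof -
    have "norm x > 0" using that by linarith
    then have "norm x powr - \<theta> > 0" by simp
    with bounds[of x] that c show ?thesis by (auto simp: field_simps)
  qed
  with c that show ?thesis by blast
qed

theorem proposition5:
  fixes \<beta> \<gamma> p q \<sigma>1 \<sigma>2 :: real
    and c1 c2 u v :: "real^'n::finite \<Rightarrow> real"
  defines "n \<equiv> real CARD('n)"
  defines "q0 \<equiv> (\<beta>*\<gamma>*(\<gamma>-1+q) + (\<gamma>-1)*\<sigma>1 + \<sigma>2*q) / (p*q - (\<gamma>-1)^2)"
  defines "p0 \<equiv> (\<beta>*\<gamma>*(\<gamma>-1+p) + (\<gamma>-1)*\<sigma>2 + \<sigma>1*p) / (p*q - (\<gamma>-1)^2)"
  assumes n3: "CARD('n) \<ge> 3"
    and "\<beta> > 0" and "\<gamma> > 1" and "\<beta> * \<gamma> < n"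
    and "p > 0" and "q > 0" and "q \<ge> p" and "p * q > (\<gamma>-1)^2"
    and "\<sigma>1 > - \<beta> * \<gamma>" and "\<sigma>2 > - \<beta> * \<gamma>" and "\<sigma>1 \<le> \<sigma>2"
    and "q0 + p0 \<le> (n - \<beta>*\<gamma>) / (\<gamma> - 1)"
    and "double_bounded c1" and "double_bounded c2"
    \<comment> \<open>positive solution\<close>
    and upos: "\<forall>x. u x > 0" and vpos: "\<forall>x. v x > 0"
    and "locally_L1 u" and "locally_L1 v"
    and equ: "AE x in lborel. ennreal (u x) =
                 ennreal (c1 x) * wolff \<beta> \<gamma> (\<lambda>y. norm y powr \<sigma>1 * v y powr q) x"
    and eqv: "AE x in lborel. ennreal (v x) =
                 ennreal (c2 x) * wolff \<beta> \<gamma> (\<lambda>y. norm y powr \<sigma>2 * u y powr p) x"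
    \<comment> \<open>bounded\<close>
    and bdd: "\<exists>M. \<forall>x. u x \<le> M \<and> v x \<le> M"
    \<comment> \<open>decaying\<close>
    and dec: "\<exists>\<theta>1>0. \<exists>\<theta>2>0. asymp_equiv_large u (\<lambda>x. norm x powr (-\<theta>1)) \<and>
                                  asymp_equiv_large v (\<lambda>x. norm x powr (-\<theta>2))"
    \<comment> \<open>optimal integrable\<close>
    and intu: "\<forall>r. r > n*(\<gamma>-1)/(n-\<beta>*\<gamma>) \<longrightarrow> integrable lborel (\<lambda>x. \<bar>u x\<bar> powr r)"
    and intv: "\<forall>s. s > max (n*(\<gamma>-1)/(n-\<beta>*\<gamma>))
                         (n*(\<gamma>-1)/(p*(n-\<beta>*\<gamma>)/(\<gamma>-1) - (\<beta>*\<gamma>+\<sigma>2)))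
                 \<longrightarrow> integrable lborel (\<lambda>x. \<bar>v x\<bar> powr s)"
  shows "asymp_equiv_large u (\<lambda>x. norm x powr (-((n - \<beta>*\<gamma>)/(\<gamma>-1))))"
proof -
  define e where "e = (n - \<beta>*\<gamma>) / (\<gamma>-1)"
  obtain \<theta> where \<theta>: "\<theta> > 0" and u_asymp: "asymp_equiv_large u (\<lambda>x. norm x powr - \<theta>)"
    using dec by blast
  from u_asymp obtain c R where c: "c > 0"
    and u_bounds: "\<And>x. R \<le> norm x \<Longrightarrow> norm x powr - \<theta> / c \<le> u x \<and> u x \<le> c * norm x powr - \<theta>"
    using asymp_equiv_large_norm_powrE by blast
  have "e \<le> \<theta>"
  proof (rule powr_decay_exponent_ge_if_integrable[OF \<theta>, of "1 / c" R])
    show "1 / c * norm x powr - \<theta> \<le> \<bar>u x\<bar>" if "R \<le> norm x" for x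
      using u_bounds[OF that] by auto
    show "integrable lborel (\<lambda>x. \<bar>u x\<bar> powr r)" if "DIM(real^'n) / e < r" for r
      using intu that unfolding e_def n_def by simp
  qed (use c in simp)
  moreover have "\<theta> \<le> e"
  proof -
    have "v \<in> borel_measurable lborel"
      using \<open>locally_L1 v\<close> unfolding locally_L1_def by simp
    then have "(\<lambda>y. norm y powr \<sigma>1 * v y powr q) \<in> borel_measurable lborel"
      by measurable
    moreover have "AE y in lborel. norm y powr \<sigma>1 * v y powr q > 0"
      using AE_lborel_singleton[of 0]
    proof eventually_elim
      case (elim y)
      have "v y \<noteq> 0" using vpos by (metis less_irrefl)
      with elim show ?case by simp
    qed
    ultimately obtain a where a: "a > 0"
      and u_lower: "AE x in lborel. 1 \<le> norm x \<longrightarrow> a * norm x powr - e \<le> u x"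
      using wolff_solution_ge_norm_powr[OF _ \<open>\<gamma> > 1\<close> \<open>double_bounded c1\<close> _ _ equ] \<open>\<beta> * \<gamma> < n\<close>
      unfolding e_def n_def by blast
    show ?thesis
      using u_bounds by (intro powr_decay_exponent_le[OF a u_lower]) blast
  qed
  ultimately show ?thesis
    using u_asymp unfolding e_def by simp
qed

end
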